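(* Let $b>0$, let $(\mathbf{x}_t,y_t)_{t\ge 1}$ be an arbitrary sequence with $\mathbf{x}_t\in\mathbb{R}^d$ and $y_t\in\{-1,+1\}$. Run the NR-RLS recursion: initialize $n_0^-=n_0^+=0$, $\mathbf{S}_0^-=\mathbf{S}_0^+=\mathbf{0}\in\mathbb{R}^{d\times d}$, $\mathbf{z}_0^-=\mathbf{z}_0^+=\mathbf{0}\in\mathbb{R}^d$, $\mathbf{R}_0^{-1}=\frac1b\mathbf{I}$, and for $t=1,2,\dots$ set $n_t^-=n_{t-1}^-+\frac{1-y_t}{2}$, $n_t^+=n_{t-1}^++\frac{1+y_t}{2}$, define $\beta_t^-,\beta_t^+,\beta_t,\bar{\mathbf{S}}_{t-1}$ as in the context, and $$\mathbf{G}_t^{-1}=\mathbf{R}_{t-1}^{-1}+\mathbf{R}_{t-1}^{-1}\big(\mathbf{I}-\beta_t\bar{\mathbf{S}}_{t-1}\mathbf{R}_{t-1}^{-1}\big)^{-1}\beta_t\bar{\mathbf{S}}_{t-1}\mathbf{R}_{t-1}^{-1},$$ $$\mathbf{R}_t^{-1}=\mathbf{G}_t^{-1}-\mathbf{G}_t^{-1}\big(\mathbf{I}+\beta_t\mathbf{x}_t\mathbf{x}_t^T\mathbf{G}_t^{-1}\big)^{-1}\beta_t\mathbf{x}_t\mathbf{x}_t^T\mathbf{G}_t^{-1},$$ $\mathbf{S}_t^\pm=\mathbf{S}_{t-1}^\pm+\beta_t^\pm(\mathbf{x}_t\mathbf{x}_t^T-\mathbf{S}_{t-1}^\pm)$,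 $\mathbf{z}_t^\pm=\mathbf{z}_{t-1}^\pm+\beta_t^\pm(\mathbf{x}_ty_t-\mathbf{z}_{t-1}^\pm)$, $\mathbf{z}_t=\mathbf{z}_t^-+\mathbf{z}_t^+$, and $\pmb w_t=\mathbf{R}_t^{-1}\mathbf{z}_t$. Then all the inverses appearing above exist, and for every $t\ge1$ the vector $\pmb w_t$ equals the batch TER solution $$\pmb w_t^{\mathrm{batch}}=\Big(\tfrac{1}{n_t^-}\sum_{i\le t,\,y_i=-1}\mathbf{x}_i\mathbf{x}_i^T+\tfrac{1}{n_t^+}\sum_{j\le t,\,y_j=+1}\mathbf{x}_j\mathbf{x}_j^T+b\mathbf{I}\Big)^{-1}\Big(\tfrac{1}{n_t^-}\sum_{i\le t,\,y_i=-1}\mathbf{x}_iy_i+\tfrac{1}{n_t^+}\sum_{j\le t,\,y_j=+1}\mathbf{x}_jy_j\Big),$$ (i.e. $(\mathbf{X}_t^T\mathbf{W}_t\mathbf{X}_t+b\mathbf{I})^{-1}\mathbf{X}_t^T\mathbf{W}_t\mathbf{y}_t$), which is the unique minimizer over $\pmb w\in\mathbb{R}^d$ of $$J_t(\pmb w)=\frac{1}{2n_t^-}\sum_{i\le t,\,y_i=-1}(y_i-\pmb w^T\mathbf{x}_i)^2+\frac{1}{2n_t^+}\sum_{j\le t,\,y_j=+1}(y_j-\pmb w^T\mathbf{x}_j)^2+\frac b2\|\pmb w\|_2^2 .$$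
   Context: Convention: any term of the form $\frac{1}{n}\sum(\cdots)$ over an empty class (i.e. with $n=0$) is defined to be zero. Definitions: $\beta_t^-=\frac{1}{n_t^-}$ if $y_t=-1$ and $\beta_t^-=0$ if $y_t=+1$; $\beta_t^+=\frac{1}{n_t^+}$ if $y_t=+1$ and $\beta_t^+=0$ if $y_t=-1$ (equivalently $\beta_t^-=\frac{1-y_t}{2n_t^-}$, $\beta_t^+=\frac{1+y_t}{2n_t^+}$ with the convention above); $\beta_t=\beta_t^-+\beta_t^+$; $\bar{\mathbf{S}}_{t-1}=\mathbf{S}_{t-1}^-$ if $y_t=-1$ and $\bar{\mathbf{S}}_{t-1}=\mathbf{S}_{t-1}^+$ if $y_t=+1$. $\mathbf{X}_t$ is the $t\times d$ matrix with rows $\mathbf{x}_1^T,\dots,\mathbf{x}_t^T$, $\mathbf{y}_t=(y_1,\dots,y_t)^T$, and $\mathbf{W}_t$ is the diagonal $t\times t$ matrix whose $i$-th diagonal entry is $1/n_t^-$ if $y_i=-1$ and $1/n_t^+$ if $y_i=+1$. *)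

theory Defs
  imports "HOL-Analysis.Analysis"
begin

definition outer :: "real^'n \<Rightarrow> real^'n \<Rightarrow> real^'n^'n" where
  "outer u v = (\<chi> i j. u $ i * v $ j)"

text \<open>State of NR-RLS after t steps: (n^-, n^+, S^-, S^+, z^-, z^+, R^{-1}).
  Indices: samples are x 1, x 2, ...; y t in {-1,+1}.\<close>
type_synonym 'n nrrls_state =
  "real \<times> real \<times> (real^'n^'n) \<times> (real^'n^'n) \<times> (real^'n) \<times> (real^'n) \<times> (real^'n^'n)"

definition st_nm :: "'n nrrls_state \<Rightarrow> real" where "st_nm s = fst s"
definition st_np :: "'n nrrls_state \<Rightarrow> real" where "st_np s = fst (snd s)"
definition st_Sm :: "'n nrrls_state \<Rightarrow> real^'n^'n" where "st_Sm s = fst (snd (snd s))"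
definition st_Sp :: "'n nrrls_state \<Rightarrow> real^'n^'n" where "st_Sp s = fst (snd (snd (snd s)))"
definition st_zm :: "'n nrrls_state \<Rightarrow> real^'n" where "st_zm s = fst (snd (snd (snd (snd s))))"
definition st_zp :: "'n nrrls_state \<Rightarrow> real^'n" where "st_zp s = fst (snd (snd (snd (snd (snd s)))))"
definition st_Rinv :: "'n nrrls_state \<Rightarrow> real^'n^'n" where "st_Rinv s = snd (snd (snd (snd (snd (snd s)))))"

definition nr_nm_new :: "'n nrrls_state \<Rightarrow> real \<Rightarrow> real" where
  "nr_nm_new s yt = st_nm s + (1 - yt) / 2"
definition nr_np_new :: "'n nrrls_state \<Rightarrow> real \<Rightarrow> real" where
  "nr_np_new s yt = st_np s + (1 + yt) / 2"
definition nr_beta_m :: "'n nrrls_state \<Rightarrow> real \<Rightarrow> real" where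
  "nr_beta_m s yt = (if yt = -1 then 1 / nr_nm_new s yt else 0)"
definition nr_beta_p :: "'n nrrls_state \<Rightarrow> real \<Rightarrow> real" where
  "nr_beta_p s yt = (if yt = 1 then 1 / nr_np_new s yt else 0)"
definition nr_beta :: "'n nrrls_state \<Rightarrow> real \<Rightarrow> real" where
  "nr_beta s yt = nr_beta_m s yt + nr_beta_p s yt"
definition nr_Sbar :: "'n nrrls_state \<Rightarrow> real \<Rightarrow> real^'n^'n" where
  "nr_Sbar s yt = (if yt = -1 then st_Sm s else st_Sp s)"

definition nr_M1 :: "'n nrrls_state \<Rightarrow> real \<Rightarrow> real^'n^'n" where
  "nr_M1 s yt = mat 1 - nr_beta s yt *\<^sub>R (nr_Sbar s yt ** st_Rinv s)"

definition nr_Ginv :: "'n nrrls_state \<Rightarrow> real \<Rightarrow> real^'n^'n" where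
  "nr_Ginv s yt = st_Rinv s + st_Rinv s ** matrix_inv (nr_M1 s yt)
       ** (nr_beta s yt *\<^sub>R nr_Sbar s yt) ** st_Rinv s"

definition nr_M2 :: "'n nrrls_state \<Rightarrow> real^'n \<Rightarrow> real \<Rightarrow> real^'n^'n" where
  "nr_M2 s xt yt = mat 1 + nr_beta s yt *\<^sub>R (outer xt xt ** nr_Ginv s yt)"

definition nr_step :: "'n nrrls_state \<Rightarrow> real^'n \<Rightarrow> real \<Rightarrow> 'n nrrls_state" where
  "nr_step s xt yt =
    (let G = nr_Ginv s yt;
         bm = nr_beta_m s yt; bp = nr_beta_p s yt; bt = nr_beta s yt;
         Rn = G - G ** matrix_inv (nr_M2 s xt yt) ** (bt *\<^sub>R outer xt xt) ** G
     in (nr_nm_new s yt, nr_np_new s yt,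
         st_Sm s + bm *\<^sub>R (outer xt xt - st_Sm s),
         st_Sp s + bp *\<^sub>R (outer xt xt - st_Sp s),
         st_zm s + bm *\<^sub>R (yt *\<^sub>R xt - st_zm s),
         st_zp s + bp *\<^sub>R (yt *\<^sub>R xt - st_zp s),
         Rn))"

primrec nrrls :: "real \<Rightarrow> (nat \<Rightarrow> real^'n) \<Rightarrow> (nat \<Rightarrow> real) \<Rightarrow> nat \<Rightarrow> 'n nrrls_state" where
  "nrrls b x y 0 = (0, 0, 0, 0, 0, 0, (1 / b) *\<^sub>R mat 1)"
| "nrrls b x y (Suc t) = nr_step (nrrls b x y t) (x (Suc t)) (y (Suc t))"

definition nrrls_w :: "real \<Rightarrow> (nat \<Rightarrow> real^'n) \<Rightarrow> (nat \<Rightarrow> real) \<Rightarrow> nat \<Rightarrow> real^'n" where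
  "nrrls_w b x y t = st_Rinv (nrrls b x y t) *v (st_zm (nrrls b x y t) + st_zp (nrrls b x y t))"

text \<open>Batch quantities. Class sizes are the counts of samples with each label among 1..t;
  note 1/0 = 0 in Isabelle, matching the empty-class convention.\<close>
definition cnt_m :: "(nat \<Rightarrow> real) \<Rightarrow> nat \<Rightarrow> real" where
  "cnt_m y t = real (card {i \<in> {1..t}. y i = -1})"
definition cnt_p :: "(nat \<Rightarrow> real) \<Rightarrow> nat \<Rightarrow> real" where
  "cnt_p y t = real (card {i \<in> {1..t}. y i = 1})"

definition batch_A :: "real \<Rightarrow> (nat \<Rightarrow> real^'n) \<Rightarrow> (nat \<Rightarrow> real) \<Rightarrow> nat \<Rightarrow> real^'n^'n" where
  "batch_A b x y t =
     (1 / cnt_m y t) *\<^sub>R (\<Sum>i\<in>{i \<in> {1..t}. y i = -1}. outer (x i) (x i))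
   + (1 / cnt_p y t) *\<^sub>R (\<Sum>j\<in>{j \<in> {1..t}. y j = 1}. outer (x j) (x j))
   + b *\<^sub>R mat 1"

definition batch_v :: "(nat \<Rightarrow> real^'n) \<Rightarrow> (nat \<Rightarrow> real) \<Rightarrow> nat \<Rightarrow> real^'n" where
  "batch_v x y t =
     (1 / cnt_m y t) *\<^sub>R (\<Sum>i\<in>{i \<in> {1..t}. y i = -1}. y i *\<^sub>R x i)
   + (1 / cnt_p y t) *\<^sub>R (\<Sum>j\<in>{j \<in> {1..t}. y j = 1}. y j *\<^sub>R x j)"

definition ter_J :: "real \<Rightarrow> (nat \<Rightarrow> real^'n) \<Rightarrow> (nat \<Rightarrow> real) \<Rightarrow> nat \<Rightarrow> real^'n \<Rightarrow> real" where
  "ter_J b x y t w =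
     1 / (2 * cnt_m y t) * (\<Sum>i\<in>{i \<in> {1..t}. y i = -1}. (y i - w \<bullet> x i)\<^sup>2)
   + 1 / (2 * cnt_p y t) * (\<Sum>j\<in>{j \<in> {1..t}. y j = 1}. (y j - w \<bullet> x j)\<^sup>2)
   + b / 2 * (norm w)\<^sup>2"

end

theory Submission
  imports Defs
begin

text \<open>The invariant of the recursion is that \<open>R\<^sub>t\<inverse>\<close> is the inverse of the batch matrix
  \<open>A\<^sub>t = S\<^sub>t\<^sup>- + S\<^sub>t\<^sup>+ + b I\<close>, with \<open>S\<^sub>t\<^sup>\<plusminus>\<close> and \<open>z\<^sub>t\<^sup>\<plusminus>\<close> the running class means.
  A new sample of class \<open>c\<close> with step size \<open>\<beta> = 1/(n\<^sub>t\<^sup>c + 1)\<close> replaces \<open>S\<^sup>c\<close> by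
  \<open>S\<^sup>c + \<beta> (x x\<^sup>T - S\<^sup>c)\<close>, so \<open>A\<^sub>t = (A\<^sub>t\<^sub>-\<^sub>1 - \<beta> S\<^sup>c) + \<beta> x x\<^sup>T\<close>: the two formulas of the
  recursion are the Woodbury identity for the downdate to \<open>G = A\<^sub>t\<^sub>-\<^sub>1 - \<beta> S\<^sup>c\<close> and for the
  rank-one update of \<open>G\<close>. All matrices involved are a positive semidefinite matrix plus
  \<open>b I\<close>, hence invertible. Finally \<open>J\<^sub>t\<close> is a quadratic with Hessian \<open>A\<^sub>t \<ge> b I\<close> and
  gradient \<open>A\<^sub>t w - v\<^sub>t\<close>, so \<open>A\<^sub>t\<inverse> v\<^sub>t\<close> is its unique minimiser.\<close>

lemma matrix_inv_right:
  fixes A :: "'a::field^'n^'n"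
  assumes "invertible A"
  shows "A ** matrix_inv A = mat 1"
  using assms someI_ex[of "\<lambda>A'. A ** A' = mat 1 \<and> A' ** A = mat 1"]
  unfolding invertible_def matrix_inv_def by blast

lemma matrix_inv_left:
  fixes A :: "'a::field^'n^'n"
  assumes "invertible A"
  shows "matrix_inv A ** A = mat 1"
  using assms someI_ex[of "\<lambda>A'. A ** A' = mat 1 \<and> A' ** A = mat 1"]
  unfolding invertible_def matrix_inv_def by blast

lemma matrix_inv_eqI:
  fixes A B :: "'a::field^'n^'n"
  assumes "A ** B = mat 1"
  shows "matrix_inv A = B"
proof -
  have "invertible A" using assms invertible_right_inverse by blast
  have "matrix_inv A = matrix_inv A ** (A ** B)" using assms by simp
  also have "\<dots> = B" using matrix_inv_left[OF \<open>invertible A\<close>] by (simp add: matrix_mul_assoc)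
  finally show ?thesis .
qed

lemma matrix_add_rdistrib: "((A::'a::semiring_1^'n^'m) + B) ** C = A ** C + B ** (C::'a^'p^'n)"
  by (vector matrix_matrix_mult_def sum.distrib distrib_right)

text \<open>Woodbury identity, proved via the inverse \<open>R (R + B)\<inverse>\<close> of \<open>I + B R\<inverse> = (R + B) R\<inverse>\<close>.\<close>
lemma matrix_inv_add:
  fixes R B :: "'a::field^'n^'n"
  assumes R: "invertible R" and RB: "invertible (R + B)"
  shows "invertible (mat 1 + B ** matrix_inv R)"
    and "matrix_inv (R + B)
      = matrix_inv R - matrix_inv R ** matrix_inv (mat 1 + B ** matrix_inv R) ** B ** matrix_inv R"
proof -
  define Ri Q where "Ri = matrix_inv R" and "Q = matrix_inv (R + B)"
  have "mat 1 + B ** Ri = (R + B) ** Ri"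
    using matrix_inv_right[OF R] by (simp add: Ri_def matrix_add_rdistrib)
  then have right_inverse: "(mat 1 + B ** Ri) ** (R ** Q) = mat 1"
    using matrix_inv_left[OF R] matrix_inv_right[OF RB]
    by (metis Q_def Ri_def matrix_mul_assoc matrix_mul_lid)
  then have inv: "matrix_inv (mat 1 + B ** Ri) = R ** Q"
    by (rule matrix_inv_eqI)
  show "invertible (mat 1 + B ** matrix_inv R)"
    using right_inverse invertible_right_inverse Ri_def by blast
  have "Ri - Ri ** (R ** Q) ** B ** Ri = Q ** (R + B) ** Ri - Q ** B ** Ri"
    using matrix_inv_left[OF R] matrix_inv_left[OF RB]
    by (metis Q_def Ri_def matrix_mul_assoc matrix_mul_lid)
  also have "\<dots> = Q"
    using matrix_inv_right[OF R]
    by (simp add: matrix_add_ldistrib matrix_add_rdistrib matrix_mul_assoc[symmetric] Ri_def)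
  finally show "matrix_inv (R + B) = Ri - Ri ** matrix_inv (mat 1 + B ** Ri) ** B ** Ri"
    unfolding inv Q_def by simp
qed

lemma matrix_neg_lmult: "(- (A::'a::ring_1^'n^'m)) ** (B::'a^'p^'n) = - (A ** B)"
  by (vector matrix_matrix_mult_def sum_negf)

lemma matrix_neg_rmult: "(A::'a::ring_1^'n^'m) ** (- (B::'a^'p^'n)) = - (A ** B)"
  by (vector matrix_matrix_mult_def sum_negf)

lemma matrix_inv_diff_scaled:
  fixes R S :: "real^'n^'n"
  assumes "invertible R" and "invertible (R - \<beta> *\<^sub>R S)"
  shows "invertible (mat 1 - \<beta> *\<^sub>R (S ** matrix_inv R))"
    and "matrix_inv R + matrix_inv R ** matrix_inv (mat 1 - \<beta> *\<^sub>R (S ** matrix_inv R))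
        ** (\<beta> *\<^sub>R S) ** matrix_inv R = matrix_inv (R - \<beta> *\<^sub>R S)"
proof -
  have e: "mat 1 - \<beta> *\<^sub>R (S ** matrix_inv R) = mat 1 + (- (\<beta> *\<^sub>R S)) ** matrix_inv R"
    by (simp add: scalar_matrix_assoc matrix_neg_lmult)
  have "invertible (R + - (\<beta> *\<^sub>R S))" using assms(2) by simp
  note add = matrix_inv_add[OF assms(1) this, folded e]
  show "invertible (mat 1 - \<beta> *\<^sub>R (S ** matrix_inv R))" by (rule add(1))
  show "matrix_inv R + matrix_inv R ** matrix_inv (mat 1 - \<beta> *\<^sub>R (S ** matrix_inv R))
        ** (\<beta> *\<^sub>R S) ** matrix_inv R = matrix_inv (R - \<beta> *\<^sub>R S)"
    using add(2) by (simp add: matrix_neg_lmult matrix_neg_rmult)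
qed

lemma matrix_inv_add_scaled:
  fixes G U :: "real^'n^'n"
  assumes "invertible G" and "invertible (G + \<beta> *\<^sub>R U)"
  shows "invertible (mat 1 + \<beta> *\<^sub>R (U ** matrix_inv G))"
    and "matrix_inv G - matrix_inv G ** matrix_inv (mat 1 + \<beta> *\<^sub>R (U ** matrix_inv G))
        ** (\<beta> *\<^sub>R U) ** matrix_inv G = matrix_inv (G + \<beta> *\<^sub>R U)"
  using matrix_inv_add[OF assms] by (simp_all add: scalar_matrix_assoc)

definition psd_matrix :: "real^'n^'n \<Rightarrow> bool" where
  "psd_matrix M \<longleftrightarrow> (\<forall>v. 0 \<le> v \<bullet> (M *v v))"

lemma outer_mult_vector: "outer u u *v v = (u \<bullet> v) *\<^sub>R u"
  by (simp add: vec_eq_iff outer_def matrix_vector_mult_def inner_vec_def sum_distrib_left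
      sum_distrib_right mult.commute mult.left_commute)

lemma sum_matrix_vector_mult: "sum f S *v (v::real^'n) = (\<Sum>i\<in>S. f i *v v)"
  by (induction S rule: infinite_finite_induct) (auto simp: matrix_vector_mult_add_rdistrib)

lemma psd_matrix_outer: "psd_matrix (outer u u)"
  by (simp add: psd_matrix_def outer_mult_vector inner_commute)

lemma psd_matrix_sum: "(\<And>i. i \<in> S \<Longrightarrow> psd_matrix (f i)) \<Longrightarrow> psd_matrix (sum f S)"
  unfolding psd_matrix_def sum_matrix_vector_mult inner_sum_right by (simp add: sum_nonneg)

lemma psd_matrix_scaleR: "psd_matrix M \<Longrightarrow> 0 \<le> c \<Longrightarrow> psd_matrix (c *\<^sub>R M)"
  unfolding psd_matrix_def by (simp add: scaleR_matrix_vector_assoc[symmetric])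

lemma psd_matrix_add: "psd_matrix M \<Longrightarrow> psd_matrix N \<Longrightarrow> psd_matrix (M + N)"
  unfolding psd_matrix_def
  by (simp add: matrix_vector_mult_add_rdistrib inner_add_right add_nonneg_nonneg)

lemma psd_matrix_add_mat_quadratic_ge:
  "psd_matrix M \<Longrightarrow> b * (v \<bullet> v) \<le> v \<bullet> ((M + b *\<^sub>R mat 1) *v v)"
  unfolding psd_matrix_def
  by (simp add: matrix_vector_mult_add_rdistrib inner_add_right scaleR_matrix_vector_assoc[symmetric])

lemma psd_matrix_add_mat_invertible:
  fixes M :: "real^'n^'n"
  assumes "psd_matrix M" and "b > 0"
  shows "invertible (M + b *\<^sub>R mat 1)"
proof -
  have "v = 0" if "(M + b *\<^sub>R mat 1) *v v = 0" for v
  proof -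
    have "b * (v \<bullet> v) \<le> 0"
      using psd_matrix_add_mat_quadratic_ge[OF assms(1), of b v] that by simp
    with assms(2) have "v \<bullet> v \<le> 0" by (simp add: mult_le_0_iff)
    then show "v = 0" by (metis inner_eq_zero_iff inner_ge_zero order_antisym)
  qed
  then show ?thesis using invertible_left_inverse matrix_left_invertible_ker by blast
qed

definition label_class :: "(nat \<Rightarrow> real) \<Rightarrow> real \<Rightarrow> nat \<Rightarrow> nat set" where
  "label_class y c t = {i \<in> {1..t}. y i = c}"

definition class_mean :: "(nat \<Rightarrow> real) \<Rightarrow> real \<Rightarrow> nat \<Rightarrow> (nat \<Rightarrow> 'a::real_vector) \<Rightarrow> 'a" where
  "class_mean y c t f = (1 / real (card (label_class y c t))) *\<^sub>R (\<Sum>i\<in>label_class y c t. f i)"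

abbreviation class_scatter :: "(nat \<Rightarrow> real^'n) \<Rightarrow> (nat \<Rightarrow> real) \<Rightarrow> real \<Rightarrow> nat \<Rightarrow> real^'n^'n" where
  "class_scatter x y c t \<equiv> class_mean y c t (\<lambda>i. outer (x i) (x i))"

abbreviation class_moment :: "(nat \<Rightarrow> real^'n) \<Rightarrow> (nat \<Rightarrow> real) \<Rightarrow> real \<Rightarrow> nat \<Rightarrow> real^'n" where
  "class_moment x y c t \<equiv> class_mean y c t (\<lambda>i. y i *\<^sub>R x i)"

lemma finite_label_class [simp]: "finite (label_class y c t)"
  by (simp add: label_class_def)

lemma label_class_0 [simp]: "label_class y c 0 = {}"
  by (simp add: label_class_def)

lemma label_class_Suc:
  "label_class y c (Suc t) = (if y (Suc t) = c then insert (Suc t) (label_class y c t) else label_class y c t)"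
  by (auto simp: label_class_def le_Suc_eq)

lemma Suc_notin_label_class [simp]: "Suc t \<notin> label_class y c t"
  by (simp add: label_class_def)

lemma card_label_class_Suc:
  "card (label_class y c (Suc t)) = (if y (Suc t) = c then Suc (card (label_class y c t)) else card (label_class y c t))"
  by (simp add: label_class_Suc)

lemma class_mean_0 [simp]: "class_mean y c 0 f = 0"
  by (simp add: class_mean_def)

lemma sum_label_class_eq_card_class_mean:
  "(\<Sum>i\<in>label_class y c t. f i) = real (card (label_class y c t)) *\<^sub>R class_mean y c t f"
  by (cases "label_class y c t = {}") (simp_all add: class_mean_def)

lemma running_mean_update:
  fixes m v :: "'a::real_vector" and n :: real
  assumes "n \<ge> 0"
  shows "(1 / (n + 1)) *\<^sub>R (n *\<^sub>R m + v) = m + (1 / (n + 1)) *\<^sub>R (v - m)"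
proof -
  have "(1 / (n + 1)) *\<^sub>R (n *\<^sub>R m + v) = (n / (n + 1)) *\<^sub>R m + (1 / (n + 1)) *\<^sub>R v"
    by (simp add: scaleR_add_right)
  also have "n / (n + 1) = 1 - 1 / (n + 1)"
    using assms by (simp add: field_simps)
  also have "(1 - 1 / (n + 1)) *\<^sub>R m + (1 / (n + 1)) *\<^sub>R v = m + (1 / (n + 1)) *\<^sub>R (v - m)"
    by (simp add: scaleR_diff_left scaleR_diff_right)
  finally show ?thesis .
qed

lemma class_mean_Suc:
  "class_mean y c (Suc t) f = (if y (Suc t) = c
     then class_mean y c t f + (1 / (real (card (label_class y c t)) + 1)) *\<^sub>R (f (Suc t) - class_mean y c t f)
     else class_mean y c t f)"
proof (cases "y (Suc t) = c")
  case True
  define n where "n = real (card (label_class y c t))"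
  have "class_mean y c (Suc t) f = (1 / (n + 1)) *\<^sub>R (n *\<^sub>R class_mean y c t f + f (Suc t))"
    unfolding sum_label_class_eq_card_class_mean[symmetric] n_def
    using True by (simp add: class_mean_def label_class_Suc add.commute)
  with True show ?thesis by (simp add: running_mean_update n_def)
qed (simp add: class_mean_def label_class_Suc)

lemma psd_matrix_class_scatter: "psd_matrix (class_scatter x y c t)"
  unfolding class_mean_def by (intro psd_matrix_scaleR psd_matrix_sum psd_matrix_outer) simp

lemma batch_A_eq_class_scatter:
  assumes "c \<in> {-1, 1}"
  shows "batch_A b x y t = class_scatter x y c t + class_scatter x y (-c) t + b *\<^sub>R mat 1"
  using assms
  by (auto simp: batch_A_def class_mean_def label_class_def cnt_m_def cnt_p_def algebra_simps)

lemma batch_v_eq_class_moment: "batch_v x y t = class_moment x y (-1) t + class_moment x y 1 t"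
  by (simp add: batch_v_def class_mean_def label_class_def cnt_m_def cnt_p_def)

lemma batch_A_invertible: "b > 0 \<Longrightarrow> invertible (batch_A b x y t)"
  unfolding batch_A_eq_class_scatter[of 1, simplified]
  by (intro psd_matrix_add_mat_invertible psd_matrix_add psd_matrix_class_scatter)

lemma st_nr_step:
  "st_nm (nr_step s xt yt) = nr_nm_new s yt"
  "st_np (nr_step s xt yt) = nr_np_new s yt"
  "st_Sm (nr_step s xt yt) = st_Sm s + nr_beta_m s yt *\<^sub>R (outer xt xt - st_Sm s)"
  "st_Sp (nr_step s xt yt) = st_Sp s + nr_beta_p s yt *\<^sub>R (outer xt xt - st_Sp s)"
  "st_zm (nr_step s xt yt) = st_zm s + nr_beta_m s yt *\<^sub>R (yt *\<^sub>R xt - st_zm s)"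
  "st_zp (nr_step s xt yt) = st_zp s + nr_beta_p s yt *\<^sub>R (yt *\<^sub>R xt - st_zp s)"
  "st_Rinv (nr_step s xt yt) = nr_Ginv s yt
     - nr_Ginv s yt ** matrix_inv (nr_M2 s xt yt) ** (nr_beta s yt *\<^sub>R outer xt xt) ** nr_Ginv s yt"
  by (simp_all add: nr_step_def Let_def st_nm_def st_np_def st_Sm_def st_Sp_def st_zm_def st_zp_def
      st_Rinv_def)

definition nrrls_class_stats :: "(nat \<Rightarrow> real^'n) \<Rightarrow> (nat \<Rightarrow> real) \<Rightarrow> nat \<Rightarrow> 'n nrrls_state \<Rightarrow> bool" where
  "nrrls_class_stats x y t s \<longleftrightarrow>
     st_nm s = real (card (label_class y (-1) t)) \<and> st_np s = real (card (label_class y 1 t))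
   \<and> st_Sm s = class_scatter x y (-1) t \<and> st_Sp s = class_scatter x y 1 t
   \<and> st_zm s = class_moment x y (-1) t \<and> st_zp s = class_moment x y 1 t"

lemma nrrls_class_stats_step:
  assumes "nrrls_class_stats x y t s" and "y (Suc t) \<in> {-1, 1}"
  shows "nrrls_class_stats x y (Suc t) (nr_step s (x (Suc t)) (y (Suc t)))"
  using assms
  by (auto simp: nrrls_class_stats_def st_nr_step nr_nm_new_def nr_np_new_def nr_beta_m_def
      nr_beta_p_def card_label_class_Suc class_mean_Suc add.commute)

lemma nr_beta_Sbar:
  assumes "nrrls_class_stats x y t s" and "c \<in> {-1, 1}"
  shows "nr_beta s c = 1 / (real (card (label_class y c t)) + 1)"
    and "nr_Sbar s c = class_scatter x y c t"
  using assms
  by (auto simp: nrrls_class_stats_def nr_beta_def nr_beta_m_def nr_beta_p_def nr_nm_new_def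
      nr_np_new_def nr_Sbar_def add.commute)

definition nrrls_invariant ::
    "real \<Rightarrow> (nat \<Rightarrow> real^'n) \<Rightarrow> (nat \<Rightarrow> real) \<Rightarrow> nat \<Rightarrow> 'n nrrls_state \<Rightarrow> bool" where
  "nrrls_invariant b x y t s \<longleftrightarrow>
     nrrls_class_stats x y t s \<and> st_Rinv s = matrix_inv (batch_A b x y t)"

lemma nrrls_invariant_step:
  assumes b: "b > 0" and y: "y (Suc t) \<in> {-1, 1}" and inv: "nrrls_invariant b x y t s"
  shows "invertible (nr_M1 s (y (Suc t)))"
    and "invertible (nr_M2 s (x (Suc t)) (y (Suc t)))"
    and "nrrls_invariant b x y (Suc t) (nr_step s (x (Suc t)) (y (Suc t)))"
proof -
  define c u where "c = y (Suc t)" and "u = x (Suc t)"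
  define \<beta> where "\<beta> = 1 / (real (card (label_class y c t)) + 1)"
  define S S' where "S = class_scatter x y c t" and "S' = class_scatter x y (-c) t"
  define R where "R = batch_A b x y t"
  have c: "c \<in> {-1, 1}" and c_ne: "-c \<noteq> c" using y by (auto simp: c_def)
  have stats: "nrrls_class_stats x y t s" and Rinv: "st_Rinv s = matrix_inv R"
    using inv by (simp_all add: nrrls_invariant_def R_def)
  have beta: "nr_beta s c = \<beta>" and Sbar: "nr_Sbar s c = S"
    using nr_beta_Sbar[OF stats c] by (simp_all add: \<beta>_def S_def)
  have R_eq: "R = S + S' + b *\<^sub>R mat 1"
    unfolding R_def S_def S'_def by (rule batch_A_eq_class_scatter[OF c])
  have R_Suc: "batch_A b x y (Suc t) = (R - \<beta> *\<^sub>R S) + \<beta> *\<^sub>R outer u u"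
    using batch_A_eq_class_scatter[OF c, of b x y "Suc t"] c_ne
    by (simp add: class_mean_Suc R_eq S_def S'_def \<beta>_def c_def u_def algebra_simps)
  have R_inv: "invertible R" unfolding R_def using b by (rule batch_A_invertible)
  have "R - \<beta> *\<^sub>R S = ((1 - \<beta>) *\<^sub>R S + S') + b *\<^sub>R mat 1"
    unfolding R_eq by (simp add: algebra_simps)
  moreover have "0 \<le> 1 - \<beta>" by (simp add: \<beta>_def)
  ultimately have G_inv: "invertible (R - \<beta> *\<^sub>R S)"
    using b by (auto intro!: psd_matrix_add_mat_invertible psd_matrix_add psd_matrix_scaleR
        simp: S_def S'_def psd_matrix_class_scatter)
  have new_inv: "invertible ((R - \<beta> *\<^sub>R S) + \<beta> *\<^sub>R outer u u)"
    unfolding R_Suc[symmetric] using b by (rule batch_A_invertible)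
  note downdate = matrix_inv_diff_scaled[OF R_inv G_inv]
  note update = matrix_inv_add_scaled[OF G_inv new_inv]
  have M1: "nr_M1 s c = mat 1 - \<beta> *\<^sub>R (S ** matrix_inv R)"
    unfolding nr_M1_def beta Sbar Rinv ..
  have Ginv: "nr_Ginv s c = matrix_inv (R - \<beta> *\<^sub>R S)"
    unfolding nr_Ginv_def M1 beta Sbar Rinv by (rule downdate(2))
  show "invertible (nr_M1 s (y (Suc t)))"
    unfolding c_def[symmetric] M1 by (rule downdate(1))
  show "invertible (nr_M2 s (x (Suc t)) (y (Suc t)))"
    unfolding c_def[symmetric] u_def[symmetric] nr_M2_def beta Ginv by (rule update(1))
  have "st_Rinv (nr_step s u c) = matrix_inv (batch_A b x y (Suc t))"
    unfolding st_nr_step nr_M2_def beta Ginv R_Suc by (rule update(2))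
  then show "nrrls_invariant b x y (Suc t) (nr_step s (x (Suc t)) (y (Suc t)))"
    using nrrls_class_stats_step[OF stats y]
    by (simp add: nrrls_invariant_def c_def u_def)
qed

lemma nrrls_invariant:
  assumes b: "b > 0" and y: "\<And>t. t \<ge> 1 \<Longrightarrow> y t \<in> {-1, 1}"
  shows "nrrls_invariant b x y t (nrrls b x y t)"
proof (induction t)
  case 0
  have "batch_A b x y 0 ** ((1 / b) *\<^sub>R mat 1) = mat 1"
    using b by (simp add: batch_A_eq_class_scatter[of 1] matrix_scalar_ac scalar_matrix_assoc[symmetric])
  then show ?case
    by (simp add: nrrls_invariant_def nrrls_class_stats_def matrix_inv_eqI st_nm_def st_np_def
        st_Sm_def st_Sp_def st_zm_def st_zp_def st_Rinv_def)
next
  case (Suc t)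
  show ?case using nrrls_invariant_step(3)[OF b y Suc.IH] by simp
qed

lemma inner_class_scatter_mult:
  "d \<bullet> (class_scatter x y c t *v w)
     = (1 / real (card (label_class y c t))) * (\<Sum>i\<in>label_class y c t. (x i \<bullet> w) * (d \<bullet> x i))"
  unfolding class_mean_def scaleR_matrix_vector_assoc[symmetric] sum_matrix_vector_mult outer_mult_vector
  by (simp add: inner_sum_right)

lemma inner_class_moment:
  "d \<bullet> class_moment x y c t = (1 / real (card (label_class y c t))) * (\<Sum>i\<in>label_class y c t. y i * (d \<bullet> x i))"
  unfolding class_mean_def by (simp add: inner_sum_right)

lemma class_sq_loss_expand:
  "1 / (2 * real (card (label_class y c t))) * (\<Sum>i\<in>label_class y c t. (y i - (w + d) \<bullet> x i)\<^sup>2)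
   = 1 / (2 * real (card (label_class y c t))) * (\<Sum>i\<in>label_class y c t. (y i - w \<bullet> x i)\<^sup>2)
     + d \<bullet> (class_scatter x y c t *v w) - d \<bullet> class_moment x y c t
     + 1/2 * (d \<bullet> (class_scatter x y c t *v d))"
proof -
  define I n where "I = label_class y c t" and "n = real (card I)"
  have "(y i - (w + d) \<bullet> x i)\<^sup>2 = (y i - w \<bullet> x i)\<^sup>2 + 2 * ((x i \<bullet> w) * (d \<bullet> x i))
      - 2 * (y i * (d \<bullet> x i)) + (x i \<bullet> d) * (d \<bullet> x i)" for i
    by (simp add: inner_add_left inner_commute power2_eq_square algebra_simps)
  then have sum_eq: "(\<Sum>i\<in>I. (y i - (w + d) \<bullet> x i)\<^sup>2) = (\<Sum>i\<in>I. (y i - w \<bullet> x i)\<^sup>2)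
     + 2 * (\<Sum>i\<in>I. (x i \<bullet> w) * (d \<bullet> x i)) - 2 * (\<Sum>i\<in>I. y i * (d \<bullet> x i))
     + (\<Sum>i\<in>I. (x i \<bullet> d) * (d \<bullet> x i))"
    by (simp add: sum.distrib sum_subtractf sum_distrib_left)
  define k where "k = 1 / n"
  have half: "1 / (2 * n) = k / 2" by (simp add: k_def)
  show ?thesis
    unfolding inner_class_scatter_mult inner_class_moment I_def[symmetric] n_def[symmetric] half sum_eq
      k_def[symmetric]
    by (simp add: algebra_simps)
qed

lemma ter_J_expand:
  "ter_J b x y t (w + d) = ter_J b x y t w + d \<bullet> (batch_A b x y t *v w - batch_v x y t)
     + 1/2 * (d \<bullet> (batch_A b x y t *v d))"
proof -
  have norm_sq: "(norm (w + d))\<^sup>2 = (norm w)\<^sup>2 + 2 * (d \<bullet> w) + (norm d)\<^sup>2"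
    by (simp add: power2_norm_eq_inner inner_add_left inner_add_right inner_commute)
  have classes: "{i \<in> {1..t}. y i = c} = label_class y c t" for c
    by (simp add: label_class_def)
  have counts: "cnt_m y t = real (card (label_class y (-1) t))" "cnt_p y t = real (card (label_class y 1 t))"
    by (simp_all add: cnt_m_def cnt_p_def label_class_def)
  show ?thesis
    unfolding ter_J_def classes counts class_sq_loss_expand norm_sq
      batch_A_eq_class_scatter[of "-1", simplified] batch_v_eq_class_moment
    by (simp add: algebra_simps inner_add_right inner_diff_right scaleR_matrix_vector_assoc[symmetric]
        power2_norm_eq_inner inner_commute)
qed

lemma quadratic_unique_minimizer:
  fixes J :: "real^'n \<Rightarrow> real" and A :: "real^'n^'n"
  assumes expand: "\<And>d. J (w + d) = J w + d \<bullet> (A *v w - v) + 1/2 * (d \<bullet> (A *v d))"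
    and coercive: "\<And>d. b * (d \<bullet> d) \<le> d \<bullet> (A *v d)" and "b > 0"
    and stationary: "A *v w = v"
  shows "J w \<le> J u" and "(\<forall>u. J w' \<le> J u) \<Longrightarrow> w' = w"
proof -
  have J_eq: "J u = J w + 1/2 * ((u - w) \<bullet> (A *v (u - w)))" for u
    using expand[of "u - w"] stationary by simp
  have "0 \<le> b * ((u - w) \<bullet> (u - w))" using \<open>b > 0\<close> by simp
  with coercive[of "u - w"] show "J w \<le> J u" unfolding J_eq[of u] by simp
  assume "\<forall>u. J w' \<le> J u"
  then have "J w' \<le> J w" by simp
  then have "(w' - w) \<bullet> (A *v (w' - w)) \<le> 0" using J_eq[of w'] by simp
  with coercive[of "w' - w"] have "b * ((w' - w) \<bullet> (w' - w)) \<le> 0" by simp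
  with \<open>b > 0\<close> have "(w' - w) \<bullet> (w' - w) \<le> 0" by (simp add: mult_le_0_iff)
  then show "w' = w" by (metis inner_eq_zero_iff inner_ge_zero order_antisym right_minus_eq)
qed

theorem theorem1:
  fixes b :: real and x :: "nat \<Rightarrow> real^'n" and y :: "nat \<Rightarrow> real"
  assumes "b > 0"
    and "\<And>t. t \<ge> 1 \<Longrightarrow> y t \<in> {-1, 1}"
  shows "\<forall>t \<ge> 1.
      invertible (nr_M1 (nrrls b x y (t - 1)) (y t))
    \<and> invertible (nr_M2 (nrrls b x y (t - 1)) (x t) (y t))
    \<and> invertible (batch_A b x y t)
    \<and> nrrls_w b x y t = matrix_inv (batch_A b x y t) *v batch_v x y t
    \<and> (\<forall>v. ter_J b x y t (nrrls_w b x y t) \<le> ter_J b x y t v)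
    \<and> (\<forall>v. (\<forall>u. ter_J b x y t v \<le> ter_J b x y t u) \<longrightarrow> v = nrrls_w b x y t)"
proof (intro allI impI)
  fix t :: nat assume "t \<ge> 1"
  then obtain k where t: "t = Suc k" by (cases t) auto
  have y: "y (Suc k) \<in> {-1, 1}" using assms(2) by simp
  have inv: "nrrls_invariant b x y s (nrrls b x y s)" for s by (rule nrrls_invariant[OF assms])
  note step = nrrls_invariant_step[OF assms(1) y inv, folded t]
  have A_inv: "invertible (batch_A b x y t)" using assms(1) by (rule batch_A_invertible)
  have w_eq: "nrrls_w b x y t = matrix_inv (batch_A b x y t) *v batch_v x y t"
    using inv[of t]
    by (simp add: nrrls_w_def nrrls_invariant_def nrrls_class_stats_def batch_v_eq_class_moment)
  have "batch_A b x y t *v nrrls_w b x y t = batch_v x y t"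
    by (simp add: w_eq matrix_vector_mul_assoc matrix_inv_right[OF A_inv])
  note minimizer = quadratic_unique_minimizer[OF ter_J_expand _ assms(1) this]
  have "b * (d \<bullet> d) \<le> d \<bullet> (batch_A b x y t *v d)" for d
    unfolding batch_A_eq_class_scatter[of 1, simplified]
    by (intro psd_matrix_add_mat_quadratic_ge psd_matrix_add psd_matrix_class_scatter)
  then show "invertible (nr_M1 (nrrls b x y (t - 1)) (y t))
    \<and> invertible (nr_M2 (nrrls b x y (t - 1)) (x t) (y t))
    \<and> invertible (batch_A b x y t)
    \<and> nrrls_w b x y t = matrix_inv (batch_A b x y t) *v batch_v x y t
    \<and> (\<forall>v. ter_J b x y t (nrrls_w b x y t) \<le> ter_J b x y t v)
    \<and> (\<forall>v. (\<forall>u. ter_J b x y t v \<le> ter_J b x y t u) \<longrightarrow> v = nrrls_w b x y t)"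
    using step(1,2) A_inv w_eq minimizer by (simp add: t)
qed

end
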